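(* Let $\Lambda$ be a finite or countable alphabet with $\#\Lambda\ge2$ and $\mu$ any shift-invariant probability measure on $\Lambda^{\mathbb N}$. If $S\subset\mathbb N$ is infinite with lower density $0$, then $S$ does not preserve simple $\mu$-normality (and hence does not preserve $\mu$-normality): there exists a $\mu$-normal $x\in\Lambda^{\mathbb N}$ such that $x|_S$ is not simply $\mu$-normal.
   Context: A point $x\in\Lambda^{\mathbb N}$ is $\mu$-normal if every finite block $B$ occurs in $x$ with limiting frequency $\mu([B])$ ($[B]$ the cylinder of sequences starting with $B$). $x$ is simply $\mu$-normal if each symbol $a\in\Lambda$ occurs in $x$ with limiting frequency $\mu([a])$. For $S=\{s_1<s_2<\dots\}$, $x|_S=(x_{s_1},x_{s_2},\dots)$. $S$ preserves (simple) $\mu$-normality if $x|_S$ is (simply) $\mu$-normal for every $\mu$-normal $x$. Lower density: $\underline d(S)=\liminf_n \#(S\cap\{1,\dots,n\})/n$. *)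

theory Defs
  imports "HOL-Probability.Probability" "HOL-Library.Infinite_Set"
begin

text \<open>Sequences over the alphabet 'a are functions nat => 'a (positions indexed from 0).\<close>

definition cylinder :: "'a list \<Rightarrow> (nat \<Rightarrow> 'a) set" where
  "cylinder B = {x. \<forall>j<length B. x j = B ! j}"

definition occurs_at :: "'a list \<Rightarrow> (nat \<Rightarrow> 'a) \<Rightarrow> nat \<Rightarrow> bool" where
  "occurs_at B x i \<longleftrightarrow> (\<forall>j<length B. x (i + j) = B ! j)"

definition block_freq :: "'a list \<Rightarrow> (nat \<Rightarrow> 'a) \<Rightarrow> nat \<Rightarrow> real" where
  "block_freq B x n = real (card {i. i < n \<and> occurs_at B x i}) / real n"

definition seq_space :: "(nat \<Rightarrow> 'a) measure" where
  "seq_space = PiM UNIV (\<lambda>_. count_space UNIV)"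

definition shift :: "(nat \<Rightarrow> 'a) \<Rightarrow> (nat \<Rightarrow> 'a)" where
  "shift x = (\<lambda>n. x (Suc n))"

definition shift_invariant_prob :: "(nat \<Rightarrow> 'a) measure \<Rightarrow> bool" where
  "shift_invariant_prob M \<longleftrightarrow> prob_space M \<and> sets M = sets seq_space \<and>
     (\<forall>A\<in>sets M. measure M (shift -` A \<inter> space M) = measure M A)"

definition mu_normal :: "(nat \<Rightarrow> 'a) measure \<Rightarrow> (nat \<Rightarrow> 'a) \<Rightarrow> bool" where
  "mu_normal M x \<longleftrightarrow> (\<forall>B. (\<lambda>n. block_freq B x n) \<longlonglongrightarrow> measure M (cylinder B))"

definition simply_mu_normal :: "(nat \<Rightarrow> 'a) measure \<Rightarrow> (nat \<Rightarrow> 'a) \<Rightarrow> bool" where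
  "simply_mu_normal M x \<longleftrightarrow> (\<forall>a. (\<lambda>n. block_freq [a] x n) \<longlonglongrightarrow> measure M (cylinder [a]))"

definition restrict_seq :: "(nat \<Rightarrow> 'a) \<Rightarrow> nat set \<Rightarrow> (nat \<Rightarrow> 'a)" where
  "restrict_seq x S = (\<lambda>k. x (enumerate S k))"

definition lower_density :: "nat set \<Rightarrow> ereal" where
  "lower_density S = liminf (\<lambda>n. ereal (real (card (S \<inter> {..<n})) / real n))"

end

theory Submission
  imports Defs
begin

definition occ_count :: "'a list \<Rightarrow> 'a list \<Rightarrow> nat" where
  "occ_count B W = card {i. i + length B \<le> length W \<and> (\<forall>j<length B. W ! (i + j) = B ! j)}"

lemma occ_count_le_length: "B \<noteq> [] \<Longrightarrow> occ_count B W \<le> length W"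
  unfolding occ_count_def
  by (rule order.trans[OF card_mono[of "{..<length W}"]]) (auto simp flip: length_greater_0_conv)

lemma occ_count_append:
  assumes "B \<noteq> []"
  shows "occ_count B u + occ_count B v \<le> occ_count B (u @ v)"
    and "occ_count B (u @ v) \<le> occ_count B u + occ_count B v + length B"
proof -
  define occ where "occ W = {i. i + length B \<le> length W \<and> (\<forall>j<length B. W ! (i + j) = B ! j)}"
    for W :: "'a list"
  define shifted where "shifted = (\<lambda>i. i + length u) ` occ v"
  have fin: "finite (occ W)" for W
    by (rule finite_subset[of _ "{..length W}"]) (auto simp: occ_def)
  have card_shifted: "card shifted = card (occ v)"
    unfolding shifted_def by (rule card_image) (simp add: inj_on_def)
  have "occ u \<inter> shifted = {}"
    using assms by (auto simp: occ_def shifted_def)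
  moreover have "occ u \<union> shifted \<subseteq> occ (u @ v)"
    by (auto simp: occ_def shifted_def nth_append)
  ultimately have "card (occ u) + card shifted \<le> card (occ (u @ v))"
    by (metis card_Un_disjoint card_mono fin finite_imageI shifted_def)
  then show "occ_count B u + occ_count B v \<le> occ_count B (u @ v)"
    using card_shifted by (simp add: occ_count_def occ_def)
  have "occ (u @ v) \<subseteq> occ u \<union> shifted \<union> {length u - length B..<length u}"
  proof
    fix i assume i: "i \<in> occ (u @ v)"
    consider "i + length B \<le> length u" | "i < length u" "length u < i + length B" | "length u \<le> i"
      by linarith
    then show "i \<in> occ u \<union> shifted \<union> {length u - length B..<length u}"
    proof cases
      case 1 then show ?thesis using i by (auto simp: occ_def nth_append)
    next
      case 2 then show ?thesis by auto
    next
      case 3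
      then have "i - length u \<in> occ v" using i by (auto simp: occ_def nth_append)
      then show ?thesis using 3 unfolding shifted_def by (auto intro!: image_eqI[of _ _ "i - length u"])
    qed
  qed
  then have "card (occ (u @ v)) \<le> card (occ u \<union> shifted \<union> {length u - length B..<length u})"
    by (rule card_mono[rotated]) (simp add: fin shifted_def)
  also have "\<dots> \<le> card (occ u) + card shifted + card {length u - length B..<length u}"
    by (meson card_Un_le add_le_mono order_refl order_trans)
  finally have "card (occ (u @ v)) \<le> card (occ u) + card shifted + length B"
    by simp
  then show "occ_count B (u @ v) \<le> occ_count B u + occ_count B v + length B"
    using card_shifted by (simp add: occ_count_def occ_def)
qed

lemma occ_count_concat:
  assumes "B \<noteq> []"
  shows "(\<Sum>w\<leftarrow>ws. occ_count B w) \<le> occ_count B (concat ws)"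
    and "occ_count B (concat ws) \<le> (\<Sum>w\<leftarrow>ws. occ_count B w) + length B * length ws"
proof (induction ws)
  case Nil
  { case 1 show ?case by simp }
  { case 2 show ?case using occ_count_le_length[OF assms, of "[]"] by simp }
next
  case (Cons w ws)
  { case 1 show ?case using Cons.IH(1) occ_count_append(1)[OF assms, of w "concat ws"] by simp }
  { case 2 show ?case using Cons.IH(2) occ_count_append(2)[OF assms, of w "concat ws"] by simp }
qed

lemma space_seq_space [simp]: "space seq_space = UNIV"
  by (simp add: seq_space_def space_PiM)

lemma sets_seq_space_occurs_at: "{x. occurs_at B x i} \<in> sets seq_space"
proof -
  have "Measurable.pred seq_space (\<lambda>x. occurs_at B x i)"
    unfolding occurs_at_def seq_space_def by measurable
  then show ?thesis by (simp add: pred_def)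
qed

lemma cylinder_eq_occurs_at_0: "cylinder B = {x. occurs_at B x 0}"
  by (simp add: cylinder_def occurs_at_def)

lemma occurs_at_Suc_eq_shift: "{x. occurs_at B x (Suc i)} = shift -` {x. occurs_at B x i}"
  by (auto simp: occurs_at_def shift_def)

lemma disjoint_cylinders:
  "length w = length w' \<Longrightarrow> w \<noteq> w' \<Longrightarrow> cylinder w \<inter> cylinder w' = {}"
  by (auto simp: cylinder_def intro: nth_equalityI)

locale shift_invariant_measure =
  fixes M :: "(nat \<Rightarrow> 'a::countable) measure"
  assumes shift_invariant: "shift_invariant_prob M"
begin

sublocale prob_space M
  using shift_invariant by (simp add: shift_invariant_prob_def)

lemma sets_M: "sets M = sets seq_space"
  using shift_invariant by (simp add: shift_invariant_prob_def)

lemma space_M [simp]: "space M = UNIV"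
  using sets_eq_imp_space_eq[OF sets_M] by simp

lemma sets_occurs_at: "{x. occurs_at B x i} \<in> sets M"
  using sets_seq_space_occurs_at sets_M by blast

lemma sets_cylinder: "cylinder B \<in> sets M"
  using sets_occurs_at[of B 0] by (simp add: cylinder_eq_occurs_at_0)

lemma measure_occurs_at: "measure M {x. occurs_at B x i} = measure M (cylinder B)"
proof (induction i)
  case 0 then show ?case by (simp add: cylinder_eq_occurs_at_0)
next
  case (Suc i)
  have "measure M (shift -` A) = measure M A" if "A \<in> sets M" for A
    using shift_invariant that by (simp add: shift_invariant_prob_def)
  then show ?case
    using Suc sets_occurs_at by (simp only: occurs_at_Suc_eq_shift)
qed

lemma measure_Union_cylinders:
  assumes "finite D" "\<forall>w\<in>D. length w = L"
  shows "measure M (\<Union>w\<in>D. cylinder w) = (\<Sum>w\<in>D. measure M (cylinder w))"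
proof (rule finite_measure_finite_Union)
  show "finite D"
    by (fact assms(1))
  show "cylinder ` D \<subseteq> sets M"
    using sets_cylinder by blast
  show "disjoint_family_on cylinder D"
    using assms(2) by (simp add: disjoint_family_on_def disjoint_cylinders)
qed

lemma finite_cylinder_cover:
  assumes "\<eta> > 0"
  obtains D where "finite D" "\<forall>w\<in>D. length w = L" "1 - \<eta> \<le> measure M (\<Union>w\<in>D. cylinder w)"
proof -
  define D where "D n = {w. \<exists>m<n. w = (from_nat m :: 'a list) \<and> length w = L}" for n
  define A where "A n = (\<Union>w\<in>D n. cylinder w)" for n
  have finite_D: "finite (D n)" for n
    by (rule finite_subset[of _ "from_nat ` {..<n}"]) (auto simp: D_def)
  have "incseq A"
    unfolding A_def D_def by (rule incseq_SucI) (auto intro: less_SucI)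
  moreover have "range A \<subseteq> sets M"
    using finite_D sets_cylinder by (auto simp: A_def)
  moreover have "(\<Union>n. A n) = space M"
  proof -
    have "x \<in> A (Suc (to_nat (map x [0..<L])))" for x
      by (auto simp: A_def D_def cylinder_def intro!: exI[of _ "map x [0..<L]"])
    then show ?thesis by auto
  qed
  ultimately have "(\<lambda>n. measure M (A n)) \<longlonglongrightarrow> 1"
    using finite_Lim_measure_incseq prob_space by metis
  then have "eventually (\<lambda>n. 1 - \<eta> < measure M (A n)) sequentially"
    using assms by (intro order_tendstoD) auto
  then obtain n where n: "1 - \<eta> < measure M (A n)"
    by (auto simp: eventually_sequentially)
  show ?thesis
  proof (rule that[of "D n"])
    show "\<forall>w\<in>D n. length w = L"
      by (auto simp: D_def)
    show "1 - \<eta> \<le> measure M (\<Union>w\<in>D n. cylinder w)"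
      using n by (simp add: A_def)
  qed (fact finite_D)
qed

lemma weighted_occ_count_eq:
  assumes "finite D" "\<forall>w\<in>D. length w = L" "length B \<le> L"
  shows "(\<Sum>w\<in>D. measure M (cylinder w) * occ_count B w)
       = (\<Sum>i\<le>L - length B. measure M ({x. occurs_at B x i} \<inter> (\<Union>w\<in>D. cylinder w)))"
proof -
  define P where "P = (\<lambda>w i. \<forall>j<length B. w ! (i + j) = B ! j)"
  have occ: "real (occ_count B w) = (\<Sum>i\<le>L - length B. if P w i then 1 else 0)" if "w \<in> D" for w
  proof -
    have "{i. i + length B \<le> length w \<and> P w i} = {..L - length B} \<inter> Collect (P w)"
      using that assms by auto
    then show ?thesis by (simp add: occ_count_def P_def sum.If_cases)
  qed
  have slice: "(\<Sum>w\<in>D. if P w i then measure M (cylinder w) else 0)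
      = measure M ({x. occurs_at B x i} \<inter> (\<Union>w\<in>D. cylinder w))" if "i \<le> L - length B" for i
  proof -
    have "{x. occurs_at B x i} \<inter> (\<Union>w\<in>D. cylinder w) = (\<Union>w\<in>{w\<in>D. P w i}. cylinder w)"
      using that assms by (auto simp: cylinder_def occurs_at_def P_def)
    then show ?thesis
      using measure_Union_cylinders[of "{w\<in>D. P w i}" L] assms by (simp add: sum.If_cases Int_def)
  qed
  have "(\<Sum>w\<in>D. measure M (cylinder w) * occ_count B w)
      = (\<Sum>w\<in>D. \<Sum>i\<le>L - length B. if P w i then measure M (cylinder w) else 0)"
    by (intro sum.cong) (auto simp: occ sum_distrib_left if_distrib intro!: sum.cong)
  also have "\<dots> = (\<Sum>i\<le>L - length B. \<Sum>w\<in>D. if P w i then measure M (cylinder w) else 0)"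
    by (rule sum.swap)
  also have "\<dots> = (\<Sum>i\<le>L - length B. measure M ({x. occurs_at B x i} \<inter> (\<Union>w\<in>D. cylinder w)))"
    using slice by (intro sum.cong) auto
  finally show ?thesis .
qed

lemma weighted_occ_count_bounds:
  assumes "finite D" "\<forall>w\<in>D. length w = L" "length B \<le> L"
  defines "mass \<equiv> measure M (\<Union>w\<in>D. cylinder w)"
  shows "(\<Sum>w\<in>D. measure M (cylinder w) * occ_count B w) \<le> (L + 1 - length B) * measure M (cylinder B)"
    and "(L + 1 - length B) * (measure M (cylinder B) - (1 - mass))
           \<le> (\<Sum>w\<in>D. measure M (cylinder w) * occ_count B w)"
proof -
  define A where "A = (\<Union>w\<in>D. cylinder w)"
  have A: "A \<in> sets M"
    using assms sets_cylinder by (auto simp: A_def)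
  have n: "L + 1 - length B = card {..L - length B}"
    using assms(3) by simp
  note sum_eq = weighted_occ_count_eq[OF assms(1-3), folded A_def]
  have "measure M ({x. occurs_at B x i} \<inter> A) \<le> measure M (cylinder B)" for i
    using finite_measure_mono[of "{x. occurs_at B x i} \<inter> A" "{x. occurs_at B x i}"] sets_occurs_at
    by (simp add: measure_occurs_at)
  then show "(\<Sum>w\<in>D. measure M (cylinder w) * occ_count B w) \<le> (L + 1 - length B) * measure M (cylinder B)"
    unfolding n sum_eq sum_constant[symmetric] by (intro sum_mono)
  have compl: "measure M (space M - A) = 1 - mass"
    using prob_compl[OF A] by (simp add: mass_def A_def)
  have "measure M (cylinder B) - (1 - mass) \<le> measure M ({x. occurs_at B x i} \<inter> A)" for i
  proof -
    have "measure M ({x. occurs_at B x i} - A) \<le> measure M (space M - A)"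
      using A by (intro finite_measure_mono sets.compl_sets) auto
    moreover have "measure M ({x. occurs_at B x i} - A)
        = measure M (cylinder B) - measure M ({x. occurs_at B x i} \<inter> A)"
      using finite_measure_Diff'[OF sets_occurs_at A] by (simp only: measure_occurs_at)
    ultimately show ?thesis
      using compl by linarith
  qed
  then show "(L + 1 - length B) * (measure M (cylinder B) - (1 - mass))
           \<le> (\<Sum>w\<in>D. measure M (cylinder w) * occ_count B w)"
    unfolding n sum_eq sum_constant[symmetric] by (intro sum_mono)
qed

end

lemma sum_floor_scaled_bounds:
  fixes m g :: "'b \<Rightarrow> real"
  assumes "finite D" "\<And>w. w \<in> D \<Longrightarrow> 0 \<le> m w" "\<And>w. w \<in> D \<Longrightarrow> 0 \<le> g w \<and> g w \<le> G" "0 \<le> N"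
  shows "(\<Sum>w\<in>D. real (nat \<lfloor>N * m w\<rfloor>) * g w) \<le> N * (\<Sum>w\<in>D. m w * g w)"
    and "N * (\<Sum>w\<in>D. m w * g w) - card D * G \<le> (\<Sum>w\<in>D. real (nat \<lfloor>N * m w\<rfloor>) * g w)"
proof -
  have floor: "N * m w - 1 \<le> real (nat \<lfloor>N * m w\<rfloor>)" "real (nat \<lfloor>N * m w\<rfloor>) \<le> N * m w"
    if "w \<in> D" for w
    using assms(2,4) that by auto
  show "(\<Sum>w\<in>D. real (nat \<lfloor>N * m w\<rfloor>) * g w) \<le> N * (\<Sum>w\<in>D. m w * g w)"
    unfolding sum_distrib_left
  proof (rule sum_mono)
    fix w assume w: "w \<in> D"
    show "real (nat \<lfloor>N * m w\<rfloor>) * g w \<le> N * (m w * g w)"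
      using mult_right_mono[OF floor(2)[OF w], of "g w"] assms(3)[OF w] by (metis mult.assoc)
  qed
  have "(\<Sum>w\<in>D. N * (m w * g w) - G) \<le> (\<Sum>w\<in>D. real (nat \<lfloor>N * m w\<rfloor>) * g w)"
  proof (rule sum_mono)
    fix w assume w: "w \<in> D"
    have "(N * m w - 1) * g w \<le> real (nat \<lfloor>N * m w\<rfloor>) * g w"
      using floor(1)[OF w] assms(3)[OF w] by (intro mult_right_mono) auto
    then show "N * (m w * g w) - G \<le> real (nat \<lfloor>N * m w\<rfloor>) * g w"
      using assms(3)[OF w] by (simp add: algebra_simps)
  qed
  then show "N * (\<Sum>w\<in>D. m w * g w) - card D * G \<le> (\<Sum>w\<in>D. real (nat \<lfloor>N * m w\<rfloor>) * g w)"
    by (simp add: sum_subtractf sum_distrib_left)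
qed

lemma sample_size_bounds:
  fixes \<epsilon> d N T mass :: real
  assumes "0 < \<epsilon>" "\<epsilon> \<le> 1" "0 \<le> d" "8 * d \<le> \<epsilon> * N" "1 - \<epsilon> / 8 \<le> mass" "mass \<le> 1"
    and "N * mass - d \<le> T" "T \<le> N * mass"
  shows "0 \<le> N" "T \<le> N" "N - T \<le> \<epsilon> * N / 4" "N \<le> 4 / 3 * T"
proof -
  have "0 \<le> \<epsilon> * N"
    using assms(3,4) by linarith
  then show N: "0 \<le> N"
    using assms(1) by (simp add: zero_le_mult_iff)
  show "T \<le> N"
    using mult_left_le[OF assms(6) N] assms(8) by linarith
  have "N * (1 - mass) \<le> N * (\<epsilon> / 8)"
    using assms(5) N by (intro mult_left_mono) auto
  then show NT: "N - T \<le> \<epsilon> * N / 4"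
    using assms(4,7) by (simp add: algebra_simps)
  have "\<epsilon> * N / 4 \<le> N / 4"
    using mult_right_mono[of \<epsilon> 1 N] assms(2) N by linarith
  then show "N \<le> 4 / 3 * T"
    using NT by linarith
qed

lemma occ_count_error_arith:
  fixes \<epsilon> \<mu> b d L N T mass occ :: real
  assumes \<epsilon>: "0 < \<epsilon>" "\<epsilon> \<le> 1" and \<mu>: "0 \<le> \<mu>" "\<mu> \<le> 1"
    and b: "1 \<le> b" "6 * b \<le> \<epsilon> * L"
    and d: "0 \<le> d" "8 * d \<le> \<epsilon> * N"
    and mass: "1 - \<epsilon> / 8 \<le> mass" "mass \<le> 1"
    and T: "N * mass - d \<le> T" "T \<le> N * mass"
    and occ_upper: "occ \<le> N * ((L + 1 - b) * \<mu>) + b * T"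
    and occ_lower: "N * ((L + 1 - b) * (\<mu> - (1 - mass))) - d * L \<le> occ"
  shows "\<bar>occ - \<mu> * (L * T)\<bar> \<le> \<epsilon> * (L * T)"
proof -
  note NT = sample_size_bounds[OF \<epsilon> d mass T]
  have "0 < \<epsilon> * L"
    using b by linarith
  then have L0: "0 \<le> L"
    using \<epsilon> by (simp add: zero_less_mult_iff)
  have "\<epsilon> * L \<le> L"
    using mult_right_mono[of \<epsilon> 1 L] \<epsilon> L0 by linarith
  then have bL: "b \<le> L"
    using b by linarith
  have T0: "0 \<le> T"
    using NT by linarith
  have "\<epsilon> * L * N \<le> \<epsilon> * L * (4 / 3 * T)"
    using NT(4) L0 \<epsilon> by (intro mult_left_mono) auto
  then have LN: "\<epsilon> * (L * N) \<le> 4 / 3 * (\<epsilon> * (L * T))"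
    by (simp add: algebra_simps)
  have LT: "0 \<le> \<epsilon> * (L * T)"
    using \<epsilon> L0 T0 by simp
  have "N * ((L + 1 - b) * \<mu>) \<le> N * (L * \<mu>)"
    using b \<mu> NT(1) by (intro mult_left_mono mult_right_mono) auto
  then have "occ - \<mu> * (L * T) \<le> \<mu> * (L * (N - T)) + b * T"
    using occ_upper by (simp add: algebra_simps)
  also have "\<mu> * (L * (N - T)) \<le> L * (N - T)"
    using mult_right_mono[of \<mu> 1 "L * (N - T)"] \<mu> L0 NT(2) by simp
  also have "L * (N - T) \<le> L * (\<epsilon> * N / 4)"
    using NT(3) L0 by (rule mult_left_mono)
  also have "b * T \<le> \<epsilon> * L / 6 * T"
    using b T0 by (intro mult_right_mono) auto
  finally have "occ - \<mu> * (L * T) \<le> \<epsilon> * (L * N) / 4 + \<epsilon> * (L * T) / 6"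
    by (simp add: algebra_simps)
  then have upper: "occ - \<mu> * (L * T) \<le> \<epsilon> * (L * T)"
    using LN LT by linarith
  have "(L + 1 - b) * (1 - mass) \<le> L * (\<epsilon> / 8)"
    using mass b bL by (intro mult_mono) auto
  moreover have "(L - b) * \<mu> \<le> (L + 1 - b) * \<mu>" "b * \<mu> \<le> b"
    using \<mu> b by (auto intro: mult_right_mono simp: mult_left_le)
  ultimately have "L * \<mu> - b - L * (\<epsilon> / 8) \<le> (L + 1 - b) * (\<mu> - (1 - mass))"
    by (simp add: algebra_simps)
  then have "N * (L * \<mu> - b - L * (\<epsilon> / 8)) \<le> N * ((L + 1 - b) * (\<mu> - (1 - mass)))"
    using NT(1) by (rule mult_left_mono)
  moreover have "\<mu> * (L * T) \<le> \<mu> * (L * N)"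
    using NT(2) L0 \<mu> by (intro mult_left_mono) auto
  moreover have "N * b \<le> N * (\<epsilon> * L / 6)"
    using NT(1) b by (intro mult_left_mono) auto
  moreover have "d * L \<le> \<epsilon> * N / 8 * L"
    using d L0 by (intro mult_right_mono) auto
  ultimately have "\<mu> * (L * T) - occ \<le> 5 / 12 * (\<epsilon> * (L * N))"
    using occ_lower by (simp add: algebra_simps)
  also have "\<dots> \<le> \<epsilon> * (L * T)"
    using LN LT by linarith
  finally show ?thesis
    using upper by (simp add: abs_le_iff)
qed

lemma sum_list_concat_replicate:
  "(\<Sum>p\<leftarrow>concat (map (\<lambda>w. replicate (c w) w) ws). f p) = (\<Sum>w\<leftarrow>ws. of_nat (c w) * f w)"
  by (induction ws) (simp_all add: sum_list_replicate)

context shift_invariant_measure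
begin

lemma approximately_normal_word:
  fixes \<epsilon> :: real
  assumes \<epsilon>: "0 < \<epsilon>" "\<epsilon> \<le> 1"
  obtains W where "k \<le> length W"
    and "\<And>B. B \<noteq> [] \<Longrightarrow> length B \<le> k \<Longrightarrow>
           \<bar>real (occ_count B W) - measure M (cylinder B) * length W\<bar> \<le> \<epsilon> * length W"
proof -
  define L where "L = nat \<lceil>6 * k / \<epsilon>\<rceil> + k + 1"
  have "6 * k / \<epsilon> \<le> L"
    using real_nat_ceiling_ge[of "6 * k / \<epsilon>"] by (simp add: L_def)
  then have L: "6 * real k \<le> \<epsilon> * L" "k < L"
    using \<epsilon> by (simp_all add: L_def pos_divide_le_eq mult.commute)
  obtain D where D: "finite D" "\<forall>w\<in>D. length w = L"
    and mass: "1 - \<epsilon> / 8 \<le> measure M (\<Union>w\<in>D. cylinder w)"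
    using finite_cylinder_cover[of "\<epsilon> / 8" L] \<epsilon> by auto
  define N where "N = 8 * card D / \<epsilon> + 2"
  define c where "c w = nat \<lfloor>N * measure M (cylinder w)\<rfloor>" for w
  obtain ws where ws: "set ws = D" "distinct ws"
    using finite_distinct_list[OF D(1)] by blast
  define ps where "ps = concat (map (\<lambda>w. replicate (c w) w) ws)"
  define T where "T = real (length ps)"
  have N: "0 \<le> N" "8 * real (card D) \<le> \<epsilon> * N"
    using \<epsilon> by (auto simp: N_def field_simps)
  have sum_ps: "(\<Sum>p\<leftarrow>ps. f p) = (\<Sum>w\<in>D. of_nat (c w) * f w)" for f :: "'a list \<Rightarrow> 'b::semiring_1"
    using ws by (simp add: ps_def sum_list_concat_replicate sum_list_distinct_conv_sum_set)
  have len_ps: "\<forall>p\<in>set ps. length p = L"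
    using D(2) ws by (auto simp: ps_def)
  have len_W: "length (concat ps) = L * length ps"
    using len_ps by (induction ps) auto
  have T: "N * measure M (\<Union>w\<in>D. cylinder w) - card D \<le> T" "T \<le> N * measure M (\<Union>w\<in>D. cylinder w)"
    using sum_floor_scaled_bounds[OF D(1), of "\<lambda>w. measure M (cylinder w)" "\<lambda>_. 1" 1 N] N
      sum_ps[of "\<lambda>_. 1 :: real"]
    by (simp_all add: T_def length_concat measure_Union_cylinders[OF D] c_def sum_list_triv)
  note sizes = sample_size_bounds[OF \<epsilon> of_nat_0_le_iff N(2) mass prob_le_1 T]
  show ?thesis
  proof (rule that[of "concat ps"])
    have "2 \<le> N"
      using \<epsilon> by (simp add: N_def)
    then have "0 < T"
      using sizes(4) by linarith
    then have "1 \<le> length ps"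
      by (simp add: T_def Suc_le_eq)
    then have "L \<le> length (concat ps)"
      using len_W by simp
    then show "k \<le> length (concat ps)"
      using L(2) by linarith
    fix B :: "'a list" assume B: "B \<noteq> []" "length B \<le> k"
    define S where "S = (\<Sum>w\<in>D. measure M (cylinder w) * occ_count B w)"
    have b: "1 \<le> real (length B)" "6 * real (length B) \<le> \<epsilon> * L" "length B \<le> L"
      using B L by (auto simp: Suc_le_eq)
    have occ_ps: "real (\<Sum>p\<leftarrow>ps. occ_count B p) = (\<Sum>w\<in>D. real (c w) * occ_count B w)"
      using sum_ps[of "\<lambda>p. real (occ_count B p)"] sum_list_of_nat[of "map (occ_count B) ps", where 'a = real]
      by (simp add: o_def)
    have "0 \<le> real (occ_count B w) \<and> real (occ_count B w) \<le> real L" if "w \<in> D" for w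
      using occ_count_le_length[OF B(1), of w] D(2) that by auto
    then have floor_sum: "(\<Sum>w\<in>D. real (c w) * occ_count B w) \<le> N * S"
      "N * S - real (card D) * real L \<le> (\<Sum>w\<in>D. real (c w) * occ_count B w)"
      using sum_floor_scaled_bounds[OF D(1), of "\<lambda>w. measure M (cylinder w)" "\<lambda>w. occ_count B w" L N]
        N(1) by (auto simp: S_def c_def)
    have concat: "real (occ_count B (concat ps)) \<le> real (\<Sum>p\<leftarrow>ps. occ_count B p) + length B * T"
      "real (\<Sum>p\<leftarrow>ps. occ_count B p) \<le> real (occ_count B (concat ps))"
      using occ_count_concat[OF B(1), of ps] by (simp_all add: T_def flip: of_nat_mult of_nat_add)
    have Lb: "real (L + 1 - length B) = real L + 1 - length B"
      using b(3) by simp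
    note S = weighted_occ_count_bounds[OF D b(3), folded S_def, unfolded Lb]
    have "N * S \<le> N * ((real L + 1 - length B) * measure M (cylinder B))"
      using S(1) N(1) by (rule mult_left_mono)
    then have upper: "real (occ_count B (concat ps))
        \<le> N * ((real L + 1 - length B) * measure M (cylinder B)) + length B * T"
      using concat occ_ps floor_sum by linarith
    have "N * ((real L + 1 - length B) * (measure M (cylinder B) - (1 - measure M (\<Union>w\<in>D. cylinder w))))
        \<le> N * S"
      using S(2) N(1) by (rule mult_left_mono)
    then have lower: "N * ((real L + 1 - length B) * (measure M (cylinder B) - (1 - measure M (\<Union>w\<in>D. cylinder w))))
        - real (card D) * real L \<le> real (occ_count B (concat ps))"
      using concat occ_ps floor_sum by linarith
    show "\<bar>real (occ_count B (concat ps)) - measure M (cylinder B) * length (concat ps)\<bar>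
          \<le> \<epsilon> * length (concat ps)"
      using occ_count_error_arith[OF \<epsilon> measure_nonneg prob_le_1 b(1,2) of_nat_0_le_iff N(2) mass
          prob_le_1 T upper lower]
      by (simp add: len_W T_def mult_ac)
  qed
qed

end

definition occ_upto :: "'a list \<Rightarrow> (nat \<Rightarrow> 'a) \<Rightarrow> nat \<Rightarrow> nat" where
  "occ_upto B x n = card {i. i < n \<and> occurs_at B x i}"

lemma block_freq_eq_occ_upto: "block_freq B x n = occ_upto B x n / n"
  by (simp add: block_freq_def occ_upto_def)

lemma occ_upto_split:
  assumes "m \<le> n"
  shows "occ_upto B x n = occ_upto B x m + card {i. m \<le> i \<and> i < n \<and> occurs_at B x i}"
proof -
  have "{i. i < n \<and> occurs_at B x i} = {i. i < m \<and> occurs_at B x i} \<union> {i. m \<le> i \<and> i < n \<and> occurs_at B x i}"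
    using assms by auto
  moreover have "{i. i < m \<and> occurs_at B x i} \<inter> {i. m \<le> i \<and> i < n \<and> occurs_at B x i} = {}"
    by auto
  moreover have "finite {i. m \<le> i \<and> i < n \<and> occurs_at B x i}"
    by (rule finite_subset[of _ "{..<n}"]) auto
  ultimately show ?thesis
    unfolding occ_upto_def by (simp add: card_Un_disjoint)
qed

lemma occ_upto_discrepancy_diff:
  fixes \<mu> :: real
  assumes "m \<le> n" "0 \<le> \<mu>" "\<mu> \<le> 1"
  shows "\<bar>(occ_upto B x n - \<mu> * n) - (occ_upto B x m - \<mu> * m)\<bar> \<le> n - m"
proof -
  have "card {i. m \<le> i \<and> i < n \<and> occurs_at B x i} \<le> card {m..<n}"
    by (rule card_mono) auto
  then have "occ_upto B x m \<le> occ_upto B x n" "occ_upto B x n \<le> occ_upto B x m + (n - m)"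
    using occ_upto_split[OF assms(1), of B x] by simp_all
  then have "real (occ_upto B x m) \<le> occ_upto B x n" "real (occ_upto B x n) \<le> occ_upto B x m + (real n - m)"
    using assms(1) by (simp_all flip: of_nat_add)
  moreover have "0 \<le> \<mu> * (real n - m)" "\<mu> * (real n - m) \<le> real n - m"
    using assms by (auto simp: mult_left_le_one_le)
  ultimately show ?thesis
    unfolding abs_le_iff right_diff_distrib by linarith
qed

locale block_sequence =
  fixes blk :: "nat \<Rightarrow> 'a list"
  assumes blk_nonempty: "\<And>j. blk j \<noteq> []"
begin

definition start :: "nat \<Rightarrow> nat" where
  "start j = (\<Sum>i<j. length (blk i))"

definition block_of :: "nat \<Rightarrow> nat" where
  "block_of p = (LEAST j. p < start (Suc j))"

definition seq :: "nat \<Rightarrow> 'a" where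
  "seq p = blk (block_of p) ! (p - start (block_of p))"

lemma start_Suc: "start (Suc j) = start j + length (blk j)"
  by (simp add: start_def)

lemma start_less_Suc: "start j < start (Suc j)"
  using blk_nonempty[of j] by (simp add: start_Suc)

lemma le_start: "j \<le> start j"
proof (induction j)
  case (Suc j)
  then show ?case
    using start_less_Suc[of j] by linarith
qed (simp add: start_def)

lemma start_mono: "j \<le> j' \<Longrightarrow> start j \<le> start j'"
  unfolding start_def by (rule sum_mono2) auto

lemma block_of_bounds: "start (block_of p) \<le> p" "p < start (Suc (block_of p))"
proof -
  have ex: "\<exists>j. p < start (Suc j)"
    using le_start[of "Suc p"] by (intro exI[of _ p]) simp
  show "p < start (Suc (block_of p))"
    unfolding block_of_def by (rule LeastI_ex[OF ex])
  show "start (block_of p) \<le> p"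
  proof (cases "block_of p")
    case (Suc j)
    then have "j < block_of p"
      by simp
    then have "\<not> p < start (Suc j)"
      unfolding block_of_def by (rule not_less_Least)
    then show ?thesis using Suc by simp
  qed (simp add: start_def)
qed

lemma block_of_eq:
  assumes "start j \<le> p" "p < start (Suc j)"
  shows "block_of p = j"
  unfolding block_of_def
proof (rule Least_equality)
  fix i assume i: "p < start (Suc i)"
  show "j \<le> i"
  proof (rule ccontr)
    assume "\<not> j \<le> i"
    then have "start (Suc i) \<le> start j"
      by (intro start_mono) simp
    then show False
      using assms(1) i by simp
  qed
qed (fact assms(2))

lemma seq_start_add: "q < length (blk j) \<Longrightarrow> seq (start j + q) = blk j ! q"
  using block_of_eq[of j "start j + q"] by (simp add: seq_def start_Suc)

lemma occurs_at_seq_in_block: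
  assumes "q + length B \<le> length (blk j)"
  shows "occurs_at B seq (start j + q) \<longleftrightarrow> (\<forall>i<length B. blk j ! (q + i) = B ! i)"
  using assms by (auto simp: occurs_at_def add.assoc seq_start_add)

lemma occurrences_in_block:
  fixes B :: "'a list" and j :: nat
  defines "A \<equiv> {i. start j \<le> i \<and> i < start (Suc j) \<and> occurs_at B seq i}"
  assumes "B \<noteq> []"
  shows "occ_count B (blk j) \<le> card A" "card A \<le> occ_count B (blk j) + length B"
proof -
  define Q where "Q = {q. q + length B \<le> length (blk j) \<and> (\<forall>i<length B. blk j ! (q + i) = B ! i)}"
  have Q: "occ_count B (blk j) = card ((+) (start j) ` Q)"
    by (simp add: occ_count_def Q_def card_image)
  have "(+) (start j) ` Q \<subseteq> A"
  proof
    fix i assume "i \<in> (+) (start j) ` Q"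
    then obtain q where q: "q \<in> Q" "i = start j + q"
      by auto
    then have len: "q + length B \<le> length (blk j)"
      by (simp add: Q_def)
    then have "occurs_at B seq i"
      using q occurs_at_seq_in_block[of q B j] by (simp add: Q_def)
    moreover have "q < length (blk j)"
      using len assms(2) by (cases B) auto
    ultimately show "i \<in> A"
      using q(2) by (simp add: A_def start_Suc)
  qed
  then show "occ_count B (blk j) \<le> card A"
    unfolding Q A_def by (rule card_mono[rotated]) simp
  have cover: "A \<subseteq> (+) (start j) ` Q \<union> {start (Suc j) - length B..<start (Suc j)}"
  proof
    fix i assume i: "i \<in> A"
    show "i \<in> (+) (start j) ` Q \<union> {start (Suc j) - length B..<start (Suc j)}"
    proof (cases "i + length B \<le> start (Suc j)")
      case True
      then have "i - start j \<in> Q"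
        using i occurs_at_seq_in_block[of "i - start j" B j] by (simp add: A_def Q_def start_Suc)
      moreover have "i = start j + (i - start j)"
        using i by (simp add: A_def)
      ultimately show ?thesis
        by blast
    next
      case False
      then have "start (Suc j) - length B \<le> i"
        by linarith
      then show ?thesis
        using i by (simp add: A_def)
    qed
  qed
  have "finite Q"
    by (rule finite_subset[of _ "{..length (blk j)}"]) (auto simp: Q_def)
  then have "card A \<le> card ((+) (start j) ` Q \<union> {start (Suc j) - length B..<start (Suc j)})"
    using cover by (intro card_mono) simp_all
  also have "\<dots> \<le> card ((+) (start j) ` Q) + card {start (Suc j) - length B..<start (Suc j)}"
    by (rule card_Un_le)
  finally show "card A \<le> occ_count B (blk j) + length B"
    using Q by simp
qed

end

context block_sequence
begin

lemma discrepancy_across_blocks: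
  fixes \<mu> e :: real
  assumes B: "B \<noteq> []" and "J0 \<le> J"
    and good: "\<And>j. J0 \<le> j \<Longrightarrow> \<bar>occ_count B (blk j) - \<mu> * length (blk j)\<bar> \<le> e * length (blk j)
                            \<and> length B \<le> e * length (blk j)"
  defines "D \<equiv> \<lambda>n. real (occ_upto B seq n) - \<mu> * n"
  shows "\<bar>D (start J)\<bar> \<le> \<bar>D (start J0)\<bar> + 2 * e * (real (start J) - start J0)"
  using \<open>J0 \<le> J\<close>
proof (induction J rule: dec_induct)
  case (step j)
  define c where "c = card {i. start j \<le> i \<and> i < start (Suc j) \<and> occurs_at B seq i}"
  have "D (start (Suc j)) = D (start j) + (c - \<mu> * length (blk j))"
    using occ_upto_split[of "start j" "start (Suc j)" B seq]
    by (simp add: D_def c_def start_Suc algebra_simps)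
  moreover have "occ_count B (blk j) \<le> c" "c \<le> occ_count B (blk j) + length B"
    using occurrences_in_block[OF B, of j] by (simp_all add: c_def)
  ultimately have "\<bar>D (start (Suc j))\<bar> \<le> \<bar>D (start j)\<bar> + 2 * e * length (blk j)"
    using good[OF step(1)] by (simp add: abs_le_iff) linarith
  then show ?case
    using step(3) by (simp add: start_Suc algebra_simps)
qed simp

lemma block_freq_tendsto:
  fixes \<mu> :: real
  assumes B: "B \<noteq> []" and \<mu>: "0 \<le> \<mu>" "\<mu> \<le> 1"
    and good: "\<And>e :: real. 0 < e \<Longrightarrow> eventually (\<lambda>j. \<bar>occ_count B (blk j) - \<mu> * length (blk j)\<bar> \<le> e * length (blk j)
        \<and> real (length B) \<le> e * length (blk j) \<and> real (length (blk j)) \<le> e * start j) sequentially"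
  shows "(\<lambda>n. block_freq B seq n) \<longlonglongrightarrow> \<mu>"
proof (rule LIMSEQ_I)
  fix r :: real assume r: "0 < r"
  define e where "e = r / 8"
  define D where "D n = real (occ_upto B seq n) - \<mu> * n" for n
  obtain J0 where J0: "\<And>j. J0 \<le> j \<Longrightarrow> \<bar>occ_count B (blk j) - \<mu> * length (blk j)\<bar> \<le> e * length (blk j)
        \<and> real (length B) \<le> e * length (blk j) \<and> real (length (blk j)) \<le> e * start j"
    using good[of e] r by (auto simp: e_def eventually_sequentially)
  define N0 where "N0 = max (start J0) (nat \<lceil>\<bar>D (start J0)\<bar> / e\<rceil>) + 1"
  show "\<exists>no. \<forall>n\<ge>no. norm (block_freq B seq n - \<mu>) < r"
  proof (intro exI allI impI)
    fix n assume n: "N0 \<le> n"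
    define J where "J = block_of n"
    have J: "start J \<le> n" "n < start (Suc J)"
      using block_of_bounds[of n] by (simp_all add: J_def)
    have "J0 \<le> J"
    proof (rule ccontr)
      assume "\<not> J0 \<le> J"
      then have "start (Suc J) \<le> start J0"
        by (intro start_mono) simp
      then show False
        using J(2) n by (simp add: N0_def)
    qed
    have e: "0 < e"
      using r by (simp add: e_def)
    have "\<bar>D n - D (start J)\<bar> \<le> real n - start J"
      using occ_upto_discrepancy_diff[OF J(1) \<mu>] by (simp add: D_def)
    also have "\<dots> \<le> length (blk J)"
      using J(2) by (simp add: start_Suc)
    also have "\<dots> \<le> e * start J"
      using J0[OF \<open>J0 \<le> J\<close>] by blast
    also have "\<dots> \<le> e * n"
      using J(1) e by simp
    finally have within: "\<bar>D n - D (start J)\<bar> \<le> e * n" .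
    have "\<bar>D (start J)\<bar> \<le> \<bar>D (start J0)\<bar> + 2 * e * (real (start J) - start J0)"
      using discrepancy_across_blocks[OF B \<open>J0 \<le> J\<close>, of \<mu> e] J0 by (simp add: D_def)
    also have "\<dots> \<le> \<bar>D (start J0)\<bar> + 2 * (e * n)"
      using J(1) e by simp
    finally have across: "\<bar>D (start J)\<bar> \<le> \<bar>D (start J0)\<bar> + 2 * (e * n)" .
    have "\<bar>D (start J0)\<bar> / e \<le> n"
      using n real_nat_ceiling_ge[of "\<bar>D (start J0)\<bar> / e"] by (simp add: N0_def)
    then have initial: "\<bar>D (start J0)\<bar> \<le> e * n"
      using e by (simp add: pos_divide_le_eq mult.commute)
    have "0 < n"
      using n by (simp add: N0_def)
    have "\<bar>D n\<bar> \<le> 4 * (e * n)"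
      using within across initial by linarith
    then have "\<bar>D n\<bar> / n \<le> r / 2"
      using \<open>0 < n\<close> by (simp add: e_def pos_divide_le_eq)
    then have "\<bar>D n\<bar> / n < r"
      using r by linarith
    moreover have "block_freq B seq n - \<mu> = D n / n"
      using \<open>0 < n\<close> by (simp add: block_freq_eq_occ_upto D_def field_simps)
    ultimately show "norm (block_freq B seq n - \<mu>) < r"
      by simp
  qed
qed

end

definition slow_index :: "(nat \<Rightarrow> nat) \<Rightarrow> nat \<Rightarrow> nat" where
  "slow_index f j = Max {k. k \<le> j \<and> k * f k \<le> j}"

lemma finite_slow_index_candidates: "finite {k. k \<le> j \<and> k * f k \<le> (j :: nat)}"
  by (rule finite_subset[of _ "{..j}"]) auto

lemma slow_index_mult_le: "slow_index f j * f (slow_index f j) \<le> j"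
proof -
  have "{k. k \<le> j \<and> k * f k \<le> j} \<noteq> {}"
    by auto
  then have "slow_index f j \<in> {k. k \<le> j \<and> k * f k \<le> j}"
    unfolding slow_index_def by (rule Max_in[OF finite_slow_index_candidates])
  then show ?thesis
    by simp
qed

lemma le_slow_index:
  assumes "0 < f K" "K * f K \<le> j"
  shows "K \<le> slow_index f j"
proof -
  have "K * 1 \<le> K * f K"
    using assms(1) by (intro mult_le_mono2) simp
  then have "K \<le> j"
    using assms(2) by linarith
  then show ?thesis
    unfolding slow_index_def using assms(2) finite_slow_index_candidates by (intro Max_ge) simp_all
qed

lemma tendsto_block_freq_Nil: "(\<lambda>n. block_freq [] x n) \<longlonglongrightarrow> 1"
proof (rule tendsto_eventually)
  show "eventually (\<lambda>n. block_freq [] x n = 1) sequentially"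
    using eventually_gt_at_top[of 0] by eventually_elim (simp add: block_freq_def occurs_at_def)
qed

context shift_invariant_measure
begin

lemma mu_normal_concat_slowly:
  fixes W :: "nat \<Rightarrow> 'a list"
  assumes W_len: "\<And>k. Suc k \<le> length (W k)"
    and W_err: "\<And>k B. B \<noteq> [] \<Longrightarrow> length B \<le> Suc k \<Longrightarrow>
      \<bar>real (occ_count B (W k)) - measure M (cylinder B) * length (W k)\<bar> \<le> 1 / Suc k * length (W k)"
  defines "\<kappa> \<equiv> slow_index (\<lambda>k. length (W k))"
  shows "mu_normal M (block_sequence.seq (\<lambda>j. W (\<kappa> j)))"
proof -
  have W_ne: "W k \<noteq> []" for k
    using W_len[of k] by auto
  then interpret block_sequence "\<lambda>j. W (\<kappa> j)"
    by unfold_locales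
  show ?thesis
    unfolding mu_normal_def
  proof
    fix B :: "'a list"
    show "(\<lambda>n. block_freq B seq n) \<longlonglongrightarrow> measure M (cylinder B)"
    proof (cases "B = []")
      case True
      then show ?thesis
        using tendsto_block_freq_Nil prob_space by (simp add: cylinder_def)
    next
      case False
      show ?thesis
      proof (rule block_freq_tendsto[OF False measure_nonneg prob_le_1])
        fix e :: real assume e: "0 < e"
        define K where "K = nat \<lceil>(length B + 1) / e\<rceil> + length B"
        have "(length B + 1) / e \<le> K"
          using real_nat_ceiling_ge[of "(length B + 1) / e"] by (simp add: K_def)
        then have K: "length B + 1 \<le> e * K"
          using e by (simp add: pos_divide_le_eq mult.commute)
        show "eventually (\<lambda>j. \<bar>occ_count B (W (\<kappa> j)) - measure M (cylinder B) * length (W (\<kappa> j))\<bar>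
              \<le> e * length (W (\<kappa> j)) \<and> real (length B) \<le> e * length (W (\<kappa> j))
              \<and> real (length (W (\<kappa> j))) \<le> e * start j) sequentially"
          unfolding eventually_sequentially
        proof (intro exI[of _ "K * length (W K)"] allI impI conjI)
          fix j assume j: "K * length (W K) \<le> j"
          have "K \<le> \<kappa> j"
            unfolding \<kappa>_def using W_ne[of K] j by (intro le_slow_index) simp_all
          moreover from this have "e * K \<le> e * \<kappa> j"
            using e by (intro mult_left_mono) simp_all
          ultimately have e\<kappa>: "length B + 1 \<le> e * \<kappa> j" "length B \<le> \<kappa> j"
            using K by (simp_all add: K_def)
          have len: "\<kappa> j \<le> length (W (\<kappa> j))"
            using W_len[of "\<kappa> j"] by simp
          have "1 \<le> e * (1 + \<kappa> j)"
            using e\<kappa>(1) e by (simp add: distrib_left)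
          then have "1 / Suc (\<kappa> j) \<le> e"
            by (simp add: divide_simps mult.commute)
          then have "1 / Suc (\<kappa> j) * length (W (\<kappa> j)) \<le> e * length (W (\<kappa> j))"
            by (rule mult_right_mono) simp
          then show "\<bar>occ_count B (W (\<kappa> j)) - measure M (cylinder B) * length (W (\<kappa> j))\<bar>
              \<le> e * length (W (\<kappa> j))"
            using W_err[OF False, of "\<kappa> j"] e\<kappa>(2) by simp
          have "e * \<kappa> j \<le> e * length (W (\<kappa> j))"
            using len e by (intro mult_left_mono) simp_all
          then show "real (length B) \<le> e * length (W (\<kappa> j))"
            using e\<kappa>(1) by linarith
          have "\<kappa> j * length (W (\<kappa> j)) \<le> j"
            unfolding \<kappa>_def by (rule slow_index_mult_le)
          then have "\<kappa> j * length (W (\<kappa> j)) \<le> start j"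
            using le_start[of j] by linarith
          then have "e * \<kappa> j * length (W (\<kappa> j)) \<le> e * start j"
            using e by (simp flip: of_nat_mult)
          moreover have "1 * real (length (W (\<kappa> j))) \<le> e * \<kappa> j * length (W (\<kappa> j))"
            using e\<kappa>(1) by (intro mult_right_mono) simp_all
          ultimately show "real (length (W (\<kappa> j))) \<le> e * start j"
            by simp
        qed
      qed
    qed
  qed
qed

lemma exists_mu_normal: "\<exists>x. mu_normal M x"
proof -
  have "\<forall>k. \<exists>W. Suc k \<le> length W \<and> (\<forall>B. B \<noteq> [] \<and> length B \<le> Suc k \<longrightarrow>
      \<bar>real (occ_count B W) - measure M (cylinder B) * length W\<bar> \<le> 1 / Suc k * length W)"
  proof
    fix k
    have "0 < 1 / real (Suc k)" "1 / real (Suc k) \<le> 1"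
      by simp_all
    then obtain W where "Suc k \<le> length W" "\<And>B. B \<noteq> [] \<Longrightarrow> length B \<le> Suc k \<Longrightarrow>
        \<bar>real (occ_count B W) - measure M (cylinder B) * length W\<bar> \<le> 1 / Suc k * length W"
      by (rule approximately_normal_word[where k = "Suc k"]) blast
    then show "\<exists>W. Suc k \<le> length W \<and> (\<forall>B. B \<noteq> [] \<and> length B \<le> Suc k \<longrightarrow>
        \<bar>real (occ_count B W) - measure M (cylinder B) * length W\<bar> \<le> 1 / Suc k * length W)"
      by blast
  qed
  from choice[OF this] obtain W where W: "\<forall>k. Suc k \<le> length (W k) \<and> (\<forall>B. B \<noteq> [] \<and> length B \<le> Suc k \<longrightarrow>
      \<bar>real (occ_count B (W k)) - measure M (cylinder B) * length (W k)\<bar> \<le> 1 / Suc k * length (W k))" ..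
  have "mu_normal M (block_sequence.seq (\<lambda>j. W (slow_index (\<lambda>k. length (W k)) j)))"
    by (rule mu_normal_concat_slowly) (use W in simp_all)
  then show ?thesis
    by blast
qed

end

definition has_density :: "nat set \<Rightarrow> real \<Rightarrow> bool" where
  "has_density T d \<longleftrightarrow> (\<lambda>n. real (card (T \<inter> {..<n})) / n) \<longlonglongrightarrow> d"

lemma card_near_hits_le:
  "card {i. i < n \<and> (\<exists>j<L. i + j \<in> T)} \<le> L * (card (T \<inter> {..<n}) + L)"
proof -
  define H where "H j = {i. i + j \<in> T \<inter> {..<n + L}}" for j
  have fin: "finite (H j)" for j
    by (rule finite_subset[of _ "{..<n + L}"]) (auto simp: H_def)
  have shift: "card (H j) \<le> card (T \<inter> {..<n + L})" for j
  proof -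
    have "card (H j) = card ((\<lambda>i. i + j) ` H j)"
      by (rule card_image[symmetric]) (simp add: inj_on_def)
    also have "\<dots> \<le> card (T \<inter> {..<n + L})"
      by (rule card_mono) (auto simp: H_def)
    finally show ?thesis .
  qed
  have "{i. i < n \<and> (\<exists>j<L. i + j \<in> T)} \<subseteq> (\<Union>j<L. H j)"
    by (auto simp: H_def)
  then have "card {i. i < n \<and> (\<exists>j<L. i + j \<in> T)} \<le> card (\<Union>j<L. H j)"
    using fin by (intro card_mono) simp_all
  also have "\<dots> \<le> (\<Sum>j<L. card (H j))"
    by (rule card_UN_le) simp
  also have "\<dots> \<le> L * card (T \<inter> {..<n + L})"
    using sum_mono[of "{..<L}", OF shift] by simp
  also have "card (T \<inter> {..<n + L}) \<le> card (T \<inter> {..<n} \<union> {n..<n + L})"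
    by (rule card_mono) auto
  also have "\<dots> \<le> card (T \<inter> {..<n}) + L"
    using card_Un_le[of "T \<inter> {..<n}" "{n..<n + L}"] by simp
  finally show ?thesis
    by (simp add: mult_le_mono2)
qed

lemma occ_upto_modify_le:
  assumes "\<And>p. p \<notin> T \<Longrightarrow> y p = x p"
  shows "occ_upto B y n \<le> occ_upto B x n + length B * (card (T \<inter> {..<n}) + length B)"
proof -
  have "{i. i < n \<and> occurs_at B y i} \<subseteq> {i. i < n \<and> occurs_at B x i} \<union> {i. i < n \<and> (\<exists>j<length B. i + j \<in> T)}"
    using assms by (auto simp: occurs_at_def)
  then have "occ_upto B y n \<le> card ({i. i < n \<and> occurs_at B x i} \<union> {i. i < n \<and> (\<exists>j<length B. i + j \<in> T)})"
    unfolding occ_upto_def by (rule card_mono[rotated]) simp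
  also have "\<dots> \<le> occ_upto B x n + card {i. i < n \<and> (\<exists>j<length B. i + j \<in> T)}"
    unfolding occ_upto_def by (rule card_Un_le)
  finally show ?thesis
    using card_near_hits_le[of n "length B" T] by linarith
qed

lemma mu_normal_modify:
  assumes x: "mu_normal M x" and T: "has_density T 0" and y: "\<And>p. p \<notin> T \<Longrightarrow> y p = x p"
  shows "mu_normal M y"
  unfolding mu_normal_def
proof
  fix B :: "'a list"
  define L where "L = length B"
  define g where "g n = L * (card (T \<inter> {..<n}) / n + L / n)" for n
  have bound: "\<bar>block_freq B y n - block_freq B x n\<bar> \<le> g n" for n
  proof -
    have "real (occ_upto B y n) \<le> occ_upto B x n + L * (card (T \<inter> {..<n}) + L)"
      using of_nat_mono[OF occ_upto_modify_le[of T y x, OF y]] by (simp add: L_def)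
    moreover have "real (occ_upto B x n) \<le> occ_upto B y n + L * (card (T \<inter> {..<n}) + L)"
      using of_nat_mono[OF occ_upto_modify_le[of T x y, OF y[symmetric]]] by (simp add: L_def)
    ultimately have "\<bar>real (occ_upto B y n) - occ_upto B x n\<bar> \<le> L * (card (T \<inter> {..<n}) + L)"
      by (simp add: abs_le_iff)
    then have "\<bar>real (occ_upto B y n) - occ_upto B x n\<bar> / n \<le> L * (card (T \<inter> {..<n}) + L) / n"
      by (rule divide_right_mono) simp
    then show ?thesis
      by (simp add: g_def block_freq_eq_occ_upto diff_divide_distrib[symmetric] add_divide_distrib[symmetric])
  qed
  have g: "g \<longlonglongrightarrow> 0"
    unfolding g_def
    using tendsto_mult_right_zero[OF tendsto_add_zero[OF T[unfolded has_density_def] lim_const_over_n]]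
    by simp
  have "(\<lambda>n. block_freq B y n - block_freq B x n) \<longlonglongrightarrow> 0"
    by (rule Lim_null_comparison[OF always_eventually g]) (use bound in simp)
  from tendsto_add[OF this x[unfolded mu_normal_def, rule_format, of B]]
  show "(\<lambda>n. block_freq B y n) \<longlonglongrightarrow> measure M (cylinder B)"
    by simp
qed

lemma lower_density_zero_frequently:
  fixes d :: real
  assumes "lower_density S = 0" "0 < d"
  shows "\<exists>b\<ge>N. real (card (S \<inter> {..<b})) < d * b"
proof (rule ccontr)
  assume "\<not> ?thesis"
  then have "\<forall>b\<ge>Suc N. ereal d \<le> ereal (real (card (S \<inter> {..<b})) / real b)"
    by (auto simp: not_less field_simps)
  then have "eventually (\<lambda>n. ereal d \<le> ereal (real (card (S \<inter> {..<n})) / real n)) sequentially"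
    unfolding eventually_sequentially by blast
  then have "ereal d \<le> lower_density S"
    unfolding lower_density_def by (rule Liminf_bounded)
  then show False
    using assms by simp
qed

lemma card_Int_lessThan_enumerate:
  fixes S :: "nat set"
  assumes "infinite S"
  shows "card (S \<inter> {..<enumerate S k}) = k"
proof -
  have "S \<inter> {..<enumerate S k} = enumerate S ` {..<k}"
  proof
    show "enumerate S ` {..<k} \<subseteq> S \<inter> {..<enumerate S k}"
      using assms by (auto intro: enumerate_in_set)
    show "S \<inter> {..<enumerate S k} \<subseteq> enumerate S ` {..<k}"
    proof
      fix s assume s: "s \<in> S \<inter> {..<enumerate S k}"
      then obtain m where "enumerate S m = s"
        using enumerate_Ex[OF assms] by blast
      moreover from this have "m < k"
        using s assms by auto
      ultimately show "s \<in> enumerate S ` {..<k}"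
        by blast
    qed
  qed
  then show ?thesis
    using inj_enumerate[OF assms] by (simp add: card_image inj_on_subset)
qed

lemma enumerate_less_iff_less_card:
  fixes S :: "nat set"
  assumes "infinite S"
  shows "enumerate S k < n \<longleftrightarrow> k < card (S \<inter> {..<n})"
proof
  assume "enumerate S k < n"
  then have "insert (enumerate S k) (S \<inter> {..<enumerate S k}) \<subseteq> S \<inter> {..<n}"
    using enumerate_in_set[OF assms] by auto
  from card_mono[OF _ this] show "k < card (S \<inter> {..<n})"
    using card_Int_lessThan_enumerate[OF assms, of k] by (simp add: card_insert_if)
next
  assume k: "k < card (S \<inter> {..<n})"
  show "enumerate S k < n"
  proof (rule ccontr)
    assume "\<not> enumerate S k < n"
    then have "card (S \<inter> {..<n}) \<le> card (S \<inter> {..<enumerate S k})"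
      by (intro card_mono) auto
    then show False
      using k card_Int_lessThan_enumerate[OF assms, of k] by simp
  qed
qed

lemma card_enumerate_in:
  fixes S :: "nat set"
  assumes "infinite S" "T \<subseteq> S"
  shows "card {k. k < card (S \<inter> {..<n}) \<and> enumerate S k \<in> T} = card (T \<inter> {..<n})"
proof -
  have "enumerate S ` {k. k < card (S \<inter> {..<n}) \<and> enumerate S k \<in> T} = T \<inter> {..<n}"
  proof
    show "enumerate S ` {k. k < card (S \<inter> {..<n}) \<and> enumerate S k \<in> T} \<subseteq> T \<inter> {..<n}"
      using enumerate_less_iff_less_card[OF assms(1)] by auto
    show "T \<inter> {..<n} \<subseteq> enumerate S ` {k. k < card (S \<inter> {..<n}) \<and> enumerate S k \<in> T}"
    proof
      fix s assume s: "s \<in> T \<inter> {..<n}"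
      then obtain k where "enumerate S k = s"
        using enumerate_Ex[OF assms(1)] assms(2) by blast
      then show "s \<in> enumerate S ` {k. k < card (S \<inter> {..<n}) \<and> enumerate S k \<in> T}"
        using s enumerate_less_iff_less_card[OF assms(1), of k n] by auto
    qed
  qed
  moreover have "inj_on (enumerate S) {k. k < card (S \<inter> {..<n}) \<and> enumerate S k \<in> T}"
    using inj_enumerate[OF assms(1)] by (rule inj_on_subset) simp
  ultimately show ?thesis
    by (metis card_image)
qed

lemma sparse_window:
  fixes S :: "nat set" and \<epsilon> :: real
  assumes S: "infinite S" "lower_density S = 0" and \<epsilon>: "0 < \<epsilon>" "\<epsilon> < 1"
  obtains b n where "N \<le> b" "b \<le> n" "real (card (S \<inter> {..<n})) \<le> \<epsilon> * b"
    "real (card (S \<inter> {..<b})) \<le> \<epsilon> * card (S \<inter> {..<n})" "0 < card (S \<inter> {..<b})"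
proof -
  define s0 where "s0 = enumerate S 0"
  obtain b where b: "max N (max (Suc s0) (nat \<lceil>2 / \<epsilon>\<rceil>)) \<le> b"
    and sparse: "real (card (S \<inter> {..<b})) < \<epsilon> * \<epsilon> / 2 * b"
    using lower_density_zero_frequently[OF S(2), where d = "\<epsilon> * \<epsilon> / 2"
        and N = "max N (max (Suc s0) (nat \<lceil>2 / \<epsilon>\<rceil>))"] \<epsilon> by auto
  have "s0 \<in> S \<inter> {..<b}"
    using enumerate_in_set[OF S(1)] b by (simp add: s0_def)
  then have pos: "0 < card (S \<inter> {..<b})"
    by (auto simp: card_gt_0_iff)
  have "2 / \<epsilon> \<le> b"
    using b real_nat_ceiling_ge[of "2 / \<epsilon>"] by linarith
  then have two: "2 \<le> \<epsilon> * b"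
    using \<epsilon> by (simp add: field_simps)
  define t where "t = nat \<lceil>card (S \<inter> {..<b}) / \<epsilon>\<rceil>"
  define n where "n = enumerate S t"
  have n: "card (S \<inter> {..<n}) = t"
    unfolding n_def by (rule card_Int_lessThan_enumerate[OF S(1)])
  have "real t = of_int \<lceil>card (S \<inter> {..<b}) / \<epsilon>\<rceil>"
    using \<epsilon> by (simp add: t_def)
  then have t: "card (S \<inter> {..<b}) / \<epsilon> \<le> t" "t < card (S \<inter> {..<b}) / \<epsilon> + 1"
    using ceiling_correct[of "card (S \<inter> {..<b}) / \<epsilon>"] by linarith+
  have "real (card (S \<inter> {..<b})) < card (S \<inter> {..<b}) / \<epsilon>"
    using pos \<epsilon> by (simp add: field_simps)
  then have less: "card (S \<inter> {..<b}) < card (S \<inter> {..<n})"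
    using t n by linarith
  have "b \<le> n"
  proof (rule ccontr)
    assume "\<not> b \<le> n"
    then have "card (S \<inter> {..<n}) \<le> card (S \<inter> {..<b})"
      by (intro card_mono) auto
    then show False
      using less by simp
  qed
  moreover have "real (card (S \<inter> {..<n})) \<le> \<epsilon> * b"
  proof -
    have "card (S \<inter> {..<b}) / \<epsilon> < \<epsilon> * b / 2"
      using sparse \<epsilon> by (simp add: field_simps)
    then show ?thesis
      using t n two by linarith
  qed
  moreover have "real (card (S \<inter> {..<b})) \<le> \<epsilon> * card (S \<inter> {..<n})"
    using t(1) n \<epsilon> by (simp add: field_simps)
  ultimately show ?thesis
    using that b pos by simp blast
qed

lemma sparse_windows:
  fixes S :: "nat set"
  assumes S: "infinite S" "lower_density S = 0"
  obtains b n :: "nat \<Rightarrow> nat" where "\<And>j. b j \<le> n j"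
    "\<And>j. real (card (S \<inter> {..<n j})) \<le> b j / (real j + 2)"
    "\<And>j. real (card (S \<inter> {..<b j})) \<le> card (S \<inter> {..<n j}) / (real j + 2)"
    "\<And>j. 0 < card (S \<inter> {..<b j})"
    "\<And>j. (j + 2) * n j \<le> b (Suc j)"
proof -
  define window where "window j p \<longleftrightarrow> fst p \<le> snd p
    \<and> real (card (S \<inter> {..<snd p})) \<le> fst p / (real j + 2)
    \<and> real (card (S \<inter> {..<fst p})) \<le> card (S \<inter> {..<snd p}) / (real j + 2)
    \<and> 0 < card (S \<inter> {..<fst p})" for j :: nat and p :: "nat \<times> nat"
  have exists: "\<exists>p. window j p \<and> N \<le> fst p" for j N
  proof -
    have "0 < 1 / (real j + 2)" "1 / (real j + 2) < 1"
      by simp_all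
    then obtain b n where "N \<le> b" "b \<le> n" "real (card (S \<inter> {..<n})) \<le> 1 / (real j + 2) * b"
      "real (card (S \<inter> {..<b})) \<le> 1 / (real j + 2) * card (S \<inter> {..<n})" "0 < card (S \<inter> {..<b})"
      by (rule sparse_window[OF S]) blast
    then show ?thesis
      by (intro exI[of _ "(b, n)"]) (simp add: window_def)
  qed
  obtain f where f: "\<And>j. window j (f j) \<and> (j + 2) * snd (f j) \<le> fst (f (Suc j))"
    using dependent_nat_choice[of window "\<lambda>j p q. (j + 2) * snd p \<le> fst q"] exists by metis
  show ?thesis
    by (rule that[of "\<lambda>j. fst (f j)" "\<lambda>j. snd (f j)"]) (use f in \<open>simp_all add: window_def\<close>)
qed

context
  fixes S :: "nat set" and b n :: "nat \<Rightarrow> nat"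
  assumes window: "\<And>j. b j \<le> n j"
    and sparse: "\<And>j. real (card (S \<inter> {..<n j})) \<le> b j / (real j + 2)"
    and full: "\<And>j. real (card (S \<inter> {..<b j})) \<le> card (S \<inter> {..<n j}) / (real j + 2)"
    and nonempty: "\<And>j. 0 < card (S \<inter> {..<b j})"
    and gap: "\<And>j. (j + 2) * n j \<le> b (Suc j)"
begin

lemma windows_mono: "mono b" "mono n"
proof -
  have "1 * n j \<le> (j + 2) * n j" for j
    by (rule mult_le_mono1) simp
  then have "n j \<le> b (Suc j)" for j
    using gap[of j] by simp
  then show "mono b" "mono n"
    unfolding mono_iff_le_Suc using window le_trans by blast+
qed

lemma le_window_start: "j \<le> b j"
proof (cases j)
  case (Suc i)
  have "0 < b i"
    using nonempty[of i] by (auto intro: Nat.gr0I)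
  then have "1 \<le> n i"
    using window[of i] by linarith
  then have "(i + 2) * 1 \<le> (i + 2) * n i"
    by (rule mult_le_mono2)
  then show ?thesis
    using gap[of i] Suc by simp
qed simp

lemma card_windows_Int_lessThan_le:
  assumes m: "b (Suc i) \<le> m" "m < b (Suc (Suc i))"
  shows "real (card (S \<inter> (\<Union>j. {b j..<n j}) \<inter> {..<m})) \<le> 2 * m / (real i + 2)"
proof -
  have "S \<inter> (\<Union>j. {b j..<n j}) \<inter> {..<m} \<subseteq> {..<n i} \<union> (S \<inter> {..<n (Suc i)})"
  proof
    fix s assume "s \<in> S \<inter> (\<Union>j. {b j..<n j}) \<inter> {..<m}"
    then obtain k where s: "s \<in> S" "b k \<le> s" "s < n k" "s < m"
      by auto
    consider "k \<le> i" | "k = Suc i" | "Suc (Suc i) \<le> k"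
      by linarith
    then show "s \<in> {..<n i} \<union> (S \<inter> {..<n (Suc i)})"
    proof cases
      case 1
      then show ?thesis
        using s monoD[OF windows_mono(2) 1] by simp
    next
      case 3
      have False
        using s m monoD[OF windows_mono(1) 3] by linarith
      then show ?thesis ..
    next
      case 2
      then show ?thesis
        using s by simp
    qed
  qed
  then have "card (S \<inter> (\<Union>j. {b j..<n j}) \<inter> {..<m}) \<le> card ({..<n i} \<union> (S \<inter> {..<n (Suc i)}))"
    by (rule card_mono[rotated]) simp
  also have "\<dots> \<le> n i + card (S \<inter> {..<n (Suc i)})"
    using card_Un_le[of "{..<n i}"] by simp
  finally have "real (card (S \<inter> (\<Union>j. {b j..<n j}) \<inter> {..<m})) \<le> n i + card (S \<inter> {..<n (Suc i)})"
    by linarith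
  moreover have "real (n i) \<le> m / (real i + 2)"
    using gap[of i] m(1) by (simp add: field_simps flip: of_nat_mult)
  moreover have "real (card (S \<inter> {..<n (Suc i)})) \<le> m / (real i + 2)"
  proof -
    have "real (b (Suc i)) / (real (Suc i) + 2) \<le> m / (real i + 2)"
      using m(1) by (intro frac_le) auto
    then show ?thesis
      using sparse[of "Suc i"] by linarith
  qed
  ultimately show ?thesis
    by (simp add: add_divide_distrib[symmetric])
qed

lemma has_density_windows: "has_density (S \<inter> (\<Union>j. {b j..<n j})) 0"
  unfolding has_density_def
proof (rule LIMSEQ_I)
  fix r :: real assume r: "0 < r"
  obtain J :: nat where J: "2 / r < J"
    using reals_Archimedean2 by blast
  show "\<exists>m0. \<forall>m\<ge>m0. norm (real (card (S \<inter> (\<Union>j. {b j..<n j}) \<inter> {..<m})) / m - 0) < r"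
  proof (intro exI allI impI)
    fix m assume m: "b (Suc J) \<le> m"
    have "m < b (Suc (Suc m))"
      using le_window_start[of "Suc (Suc m)"] by simp
    then obtain i where i: "m < b (Suc (Suc i))" "\<And>i'. i' < i \<Longrightarrow> \<not> m < b (Suc (Suc i'))"
      using exists_least_iff[of "\<lambda>i. m < b (Suc (Suc i))"] by blast
    have "J \<le> i"
    proof (rule ccontr)
      assume "\<not> J \<le> i"
      then have "b (Suc (Suc i)) \<le> b (Suc J)"
        using windows_mono(1) by (simp add: monoD)
      then show False
        using i(1) m by simp
    qed
    have "b (Suc i) \<le> m"
    proof (cases i)
      case 0
      then show ?thesis
        using m monoD[OF windows_mono(1), of 1 "Suc J"] by simp
    next
      case (Suc i')
      then show ?thesis
        using i(2)[of i'] by simp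
    qed
    then have "real (card (S \<inter> (\<Union>j. {b j..<n j}) \<inter> {..<m})) / m \<le> 2 / (real i + 2)"
      using card_windows_Int_lessThan_le[OF _ i(1)] le_window_start[of "Suc i"]
      by (simp add: divide_le_eq field_simps)
    also have "\<dots> < r"
    proof -
      have "2 < r * real J"
        using J r by (simp add: field_simps)
      also have "\<dots> \<le> r * (real i + 2)"
        using \<open>J \<le> i\<close> r by (intro mult_left_mono) auto
      finally show ?thesis
        by (simp add: divide_less_eq mult.commute)
    qed
    finally show "norm (real (card (S \<inter> (\<Union>j. {b j..<n j}) \<inter> {..<m})) / m - 0) < r"
      by simp
  qed
qed

lemma windows_almost_full:
  "real j + 2 \<le> card (S \<inter> {..<n j})"
  "(1 - 1 / (real j + 2)) * card (S \<inter> {..<n j}) \<le> card (S \<inter> (\<Union>j. {b j..<n j}) \<inter> {..<n j})"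
proof -
  have "1 \<le> real (card (S \<inter> {..<b j}))"
    using nonempty[of j] by simp
  then have "(real j + 2) * 1 \<le> (real j + 2) * card (S \<inter> {..<b j})"
    by (intro mult_left_mono) auto
  also have "\<dots> \<le> card (S \<inter> {..<n j})"
    using full[of j] by (simp add: field_simps)
  finally show "real j + 2 \<le> card (S \<inter> {..<n j})"
    by simp
  have "S \<inter> {..<n j} = (S \<inter> {..<b j}) \<union> (S \<inter> {b j..<n j})"
    using window[of j] by auto
  then have "card (S \<inter> {..<n j}) \<le> card (S \<inter> {..<b j}) + card (S \<inter> {b j..<n j})"
    by (metis card_Un_le)
  moreover have "card (S \<inter> {b j..<n j}) \<le> card (S \<inter> (\<Union>j. {b j..<n j}) \<inter> {..<n j})"
    by (rule card_mono) auto
  ultimately show "(1 - 1 / (real j + 2)) * card (S \<inter> {..<n j}) \<le> card (S \<inter> (\<Union>j. {b j..<n j}) \<inter> {..<n j})"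
    using full[of j] by (simp add: algebra_simps)
qed

end

lemma sparse_subset_of_lower_density_zero:
  fixes S :: "nat set"
  assumes "infinite S" "lower_density S = 0"
  obtains T where "T \<subseteq> S" "has_density T 0"
    "\<And>(\<epsilon> :: real) K. 0 < \<epsilon> \<Longrightarrow> \<exists>n. K \<le> card (S \<inter> {..<n}) \<and> (1 - \<epsilon>) * card (S \<inter> {..<n}) \<le> card (T \<inter> {..<n})"
proof -
  obtain b n :: "nat \<Rightarrow> nat" where w: "\<And>j. b j \<le> n j"
    "\<And>j. real (card (S \<inter> {..<n j})) \<le> b j / (real j + 2)"
    "\<And>j. real (card (S \<inter> {..<b j})) \<le> card (S \<inter> {..<n j}) / (real j + 2)"
    "\<And>j. 0 < card (S \<inter> {..<b j})"
    "\<And>j. (j + 2) * n j \<le> b (Suc j)"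
    by (rule sparse_windows[OF assms]) blast
  show ?thesis
  proof (rule that)
    show "S \<inter> (\<Union>j. {b j..<n j}) \<subseteq> S"
      by blast
    show "has_density (S \<inter> (\<Union>j. {b j..<n j})) 0"
      by (rule has_density_windows[OF w])
    fix \<epsilon> :: real and K :: nat assume \<epsilon>: "0 < \<epsilon>"
    define j where "j = K + nat \<lceil>1 / \<epsilon>\<rceil>"
    have "1 / \<epsilon> \<le> real j + 2"
      using real_nat_ceiling_ge[of "1 / \<epsilon>"] by (simp add: j_def)
    then have "1 / (real j + 2) \<le> \<epsilon>"
      using \<epsilon> by (simp add: field_simps)
    then have "(1 - \<epsilon>) * card (S \<inter> {..<n j}) \<le> (1 - 1 / (real j + 2)) * card (S \<inter> {..<n j})"
      by (intro mult_right_mono) auto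
    moreover have "K \<le> card (S \<inter> {..<n j})"
      using windows_almost_full(1)[OF w, of j] by (simp add: j_def)
    ultimately show "\<exists>n'. K \<le> card (S \<inter> {..<n'}) \<and>
        (1 - \<epsilon>) * card (S \<inter> {..<n'}) \<le> card (S \<inter> (\<Union>j. {b j..<n j}) \<inter> {..<n'})"
      using windows_almost_full(2)[OF w, of j] by (intro exI[of _ "n j"]) simp
  qed
qed

lemma restrict_not_simply_normal:
  fixes S T :: "nat set" and M :: "(nat \<Rightarrow> 'a) measure"
  assumes S: "infinite S" and T: "T \<subseteq> S"
    and dense: "\<And>(\<epsilon> :: real) K. 0 < \<epsilon> \<Longrightarrow> \<exists>n. K \<le> card (S \<inter> {..<n}) \<and> (1 - \<epsilon>) * card (S \<inter> {..<n}) \<le> card (T \<inter> {..<n})"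
    and y: "\<And>p. p \<in> T \<Longrightarrow> y p = a" and small: "measure M (cylinder [a]) < 1"
  shows "\<not> simply_mu_normal M (restrict_seq y S)"
proof
  define \<epsilon> where "\<epsilon> = (1 - measure M (cylinder [a])) / 2"
  have \<epsilon>: "0 < \<epsilon>" "measure M (cylinder [a]) < 1 - \<epsilon>"
    using small by (simp_all add: \<epsilon>_def field_simps)
  assume "simply_mu_normal M (restrict_seq y S)"
  then have "(\<lambda>K. block_freq [a] (restrict_seq y S) K) \<longlonglongrightarrow> measure M (cylinder [a])"
    by (simp add: simply_mu_normal_def)
  from order_tendstoD(2)[OF this \<epsilon>(2)]
  obtain K0 where K0: "\<And>K. K0 \<le> K \<Longrightarrow> block_freq [a] (restrict_seq y S) K < 1 - \<epsilon>"
    by (auto simp: eventually_sequentially)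
  obtain n where n: "Suc K0 \<le> card (S \<inter> {..<n})"
    "(1 - \<epsilon>) * card (S \<inter> {..<n}) \<le> card (T \<inter> {..<n})"
    using dense[OF \<epsilon>(1), of "Suc K0"] by blast
  define K where "K = card (S \<inter> {..<n})"
  have "{k. k < K \<and> enumerate S k \<in> T} \<subseteq> {k. k < K \<and> occurs_at [a] (restrict_seq y S) k}"
    using y by (auto simp: occurs_at_def restrict_seq_def)
  then have "card {k. k < K \<and> enumerate S k \<in> T} \<le> occ_upto [a] (restrict_seq y S) K"
    unfolding occ_upto_def by (rule card_mono[rotated]) simp
  then have "(1 - \<epsilon>) * K \<le> occ_upto [a] (restrict_seq y S) K"
    using n(2) card_enumerate_in[OF S T, of n] by (simp add: K_def)
  moreover have "0 < real K"
    using n(1) by (simp add: K_def)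
  ultimately have "1 - \<epsilon> \<le> block_freq [a] (restrict_seq y S) K"
    by (simp add: block_freq_eq_occ_upto pos_le_divide_eq)
  then show False
    using K0[of K] n(1) by (simp add: K_def)
qed

lemma (in shift_invariant_measure) exists_symbol_mass_less_1:
  fixes a c :: 'a
  assumes "a \<noteq> c"
  shows "\<exists>b. measure M (cylinder [b]) < 1"
proof (rule ccontr)
  assume "\<not> ?thesis"
  then have "1 \<le> measure M (cylinder [a])" "1 \<le> measure M (cylinder [c])"
    by (auto simp: not_less)
  moreover have "measure M (cylinder [a] \<union> cylinder [c]) = measure M (cylinder [a]) + measure M (cylinder [c])"
    using disjoint_cylinders[of "[a]" "[c]"] assms by (intro finite_measure_Union sets_cylinder) auto
  ultimately show False
    using prob_le_1[of "cylinder [a] \<union> cylinder [c]"] by linarith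
qed

theorem mainTheorem3:
  fixes M :: "(nat \<Rightarrow> 'a::countable) measure" and S :: "nat set"
  assumes "\<exists>a b :: 'a. a \<noteq> b"
    and "shift_invariant_prob M"
    and "infinite S"
    and "lower_density S = 0"
  shows "\<exists>x. mu_normal M x \<and> \<not> simply_mu_normal M (restrict_seq x S)"
proof -
  interpret shift_invariant_measure M
    by unfold_locales (rule assms(2))
  obtain b where b: "measure M (cylinder [b]) < 1"
    using assms(1) exists_symbol_mass_less_1 by blast
  obtain x where x: "mu_normal M x"
    using exists_mu_normal by blast
  obtain T where T: "T \<subseteq> S" "has_density T 0"
    "\<And>(\<epsilon> :: real) K. 0 < \<epsilon> \<Longrightarrow> \<exists>n. K \<le> card (S \<inter> {..<n}) \<and> (1 - \<epsilon>) * card (S \<inter> {..<n}) \<le> card (T \<inter> {..<n})"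
    by (rule sparse_subset_of_lower_density_zero[OF assms(3,4)]) blast
  define y where "y p = (if p \<in> T then b else x p)" for p
  have yT: "y p = b" if "p \<in> T" for p
    using that by (simp add: y_def)
  have "mu_normal M y"
    by (rule mu_normal_modify[OF x T(2)]) (simp add: y_def)
  moreover have "\<not> simply_mu_normal M (restrict_seq y S)"
    using assms(3) T(1) T(3) yT b by (rule restrict_not_simply_normal)
  ultimately show ?thesis
    by blast
qed

end
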